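(* Let $r\geq1$, $k\geq1$, $n\geq1$ be integers, $a<b$, $N=2kn$, $\bar h=(b-a)/N$, and let $f_0,\dots,f_{N-1}$ be the functions defined in the context for the partition $a_i=a+i\bar h$ of $[a,b]$ into $N$ subintervals. For $j=0,\dots,k-1$ define $\mathcal{X}_j:\{0,\dots,kn-1\}\to\{0,\dots,N-1\}$ by $\mathcal{X}_j(i)=n(k-j)+i-1$. Let $c_0,\dots,c_{k-1}$ be real numbers with $\sum_{j=0}^{k-1}c_j(\tfrac12+\tfrac{j}{2k}-x)^{k-1}=1$ for all $x\in\mathbb{R}$. Let $\lambda_0,\dots,\lambda_{kn-1}\in\mathbb{R}$ and set $$I_j=\int_a^b\int_a^{y_{k-1}}\cdots\int_a^{y_1}\sum_{i=0}^{kn-1}\lambda_i f_{\mathcal{X}_j(i)}(y_0)\,dy_0\cdots dy_{k-1}.$$ Then $$\sum_{j=0}^{k-1}c_jI_j=\bar h^{\,r+1}(b-a)^{k-1}\frac{1}{(k-1)!}\varphi_r^1\sum_{i=0}^{kn-1}\lambda_i=(kn)^{-r}(b-a)^{k+r}2^{-r-1}\frac{\varphi_r^1}{(k-1)!}\cdot\frac{1}{kn}\sum_{i=0}^{kn-1}\lambda_i.$$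
   Context: $U_s$ is the Chebyshev polynomial of the second kind of degree $s$; $(x-t)_+^{s}=(x-t)^{s}$ for $x\geq t$ and $0$ otherwise. $\psi_{r+1}(x)=\frac{1}{r!}\int_{-1}^1(x-t)_+^{r}\,\mathrm{sgn}\,U_{r+1}(t)\,dt$. For a constant $\alpha$ and interval $[c,d]$, $\varphi_r([c,d],x)=\alpha\left(\frac{d-c}{2}\right)^r\psi_{r+1}\!\left(\frac{2x-d-c}{d-c}\right)$ for $x\in[c,d]$. $\varphi_r^1=\left(\tfrac12\right)^{r+1}\frac{\alpha}{(r+1)!}\int_{-1}^1(1-t)^{r+1}\,\mathrm{sgn}\,U_{r+1}(t)\,dt$. For $i=0,\dots,N-1$, $f_i(x)=\varphi_r([a_i,a_{i+1}],x)$ for $x\in[a_i,a_{i+1}]$ and $f_i(x)=0$ otherwise. *)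

theory Defs
  imports "HOL-Analysis.Analysis"
begin

fun chebU :: "nat \<Rightarrow> real \<Rightarrow> real" where
  "chebU 0 x = 1"
| "chebU (Suc 0) x = 2 * x"
| "chebU (Suc (Suc s)) x = 2 * x * chebU (Suc s) x - chebU s x"

definition trunc_pow :: "nat \<Rightarrow> real \<Rightarrow> real \<Rightarrow> real" where
  "trunc_pow s x t = (if x \<ge> t then (x - t) ^ s else 0)"

text \<open>psi r x is the paper's psi_{r+1}(x).\<close>
definition psi :: "nat \<Rightarrow> real \<Rightarrow> real" where
  "psi r x = (1 / fact r) * integral {-1..1} (\<lambda>t. trunc_pow r x t * sgn (chebU (r + 1) t))"

definition phi :: "real \<Rightarrow> nat \<Rightarrow> real \<Rightarrow> real \<Rightarrow> real \<Rightarrow> real" where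
  "phi \<alpha> r c d x = \<alpha> * ((d - c) / 2) ^ r * psi r ((2 * x - d - c) / (d - c))"

definition phi1 :: "real \<Rightarrow> nat \<Rightarrow> real" where
  "phi1 \<alpha> r = (1 / 2) ^ (r + 1) * (\<alpha> / fact (r + 1)) *
     integral {-1..1} (\<lambda>t. (1 - t) ^ (r + 1) * sgn (chebU (r + 1) t))"

definition grid :: "real \<Rightarrow> real \<Rightarrow> nat \<Rightarrow> nat \<Rightarrow> real" where
  "grid a b N i = a + real i * (b - a) / real N"

definition fpiece :: "real \<Rightarrow> nat \<Rightarrow> real \<Rightarrow> real \<Rightarrow> nat \<Rightarrow> nat \<Rightarrow> real \<Rightarrow> real" where
  "fpiece \<alpha> r a b N i x =
     (if grid a b N i \<le> x \<and> x \<le> grid a b N (Suc i)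
      then phi \<alpha> r (grid a b N i) (grid a b N (Suc i)) x else 0)"

fun iter_int :: "real \<Rightarrow> nat \<Rightarrow> (real \<Rightarrow> real) \<Rightarrow> real \<Rightarrow> real" where
  "iter_int a 0 g y = g y"
| "iter_int a (Suc m) g y = integral {a..y} (iter_int a m g)"

end

theory Submission
  imports Defs
begin

text \<open>
  Cauchy's formula for repeated integration turns the k-fold iterated integral over [a, b] into a
  single integral against the weight w(t) = (b - t)^(k-1) / (k-1)!.  On its cell, f_m is a rescaled
  copy of psi_(r+1), and mapping the cell affinely onto [-1, 1] turns the integral of w f_m into
  alpha (h/2)^(r+1) times the integral of w(u_m(x)) psi_(r+1)(x).  For fixed i, the relative
  positions (b - u_m(x)) / (b - a) in the cells m = X_j(i), j < k, are the nodes 1/2 + j/(2k) - s of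
  the hypothesis for one common s, so the c_j collapse the sum over j of c_j w(u_m(x)) to the
  constant (b - a)^(k-1) / (k-1)!.  What remains is the integral of psi_(r+1) over [-1, 1]; since
  psi_(r+1) is itself the (r+1)-fold integral of sgn U_(r+1), Cauchy's formula once more gives
  phi_r^1 = alpha 2^(-r-1) times that integral.
\<close>

lemma set_integrable_Icc_bounded:
  fixes g :: "real \<Rightarrow> real"
  assumes "g \<in> borel_measurable borel" and "\<And>x. x \<in> {c..d} \<Longrightarrow> \<bar>g x\<bar> \<le> B"
  shows "set_integrable lborel {c..d} g"
  unfolding set_integrable_def
  by (rule integrableI_bounded_set_indicator[where B=B]) (use assms in \<open>auto simp: emeasure_lborel_Icc_eq\<close>)

lemma integrable_on_Icc_bounded:
  fixes g :: "real \<Rightarrow> real"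
  assumes "g \<in> borel_measurable borel" and "\<And>x. x \<in> {c..d} \<Longrightarrow> \<bar>g x\<bar> \<le> B"
  shows "g integrable_on {c..d}"
  using set_borel_integral_eq_integral(1)[OF set_integrable_Icc_bounded[OF assms]] .

lemma integral_Icc_eq_set_integral_bounded:
  fixes g :: "real \<Rightarrow> real"
  assumes "g \<in> borel_measurable borel" and "\<And>x. x \<in> {c..d} \<Longrightarrow> \<bar>g x\<bar> \<le> B"
  shows "integral {c..d} g = (LINT x:{c..d}|lborel. g x)"
  using set_borel_integral_eq_integral(2)[OF set_integrable_Icc_bounded[OF assms]] by simp

lemma abs_integral_Icc_le:
  fixes g :: "real \<Rightarrow> real"
  assumes "g integrable_on {c..d}" and "c \<le> d" and "\<And>x. x \<in> {c..d} \<Longrightarrow> \<bar>g x\<bar> \<le> B"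
  shows "\<bar>integral {c..d} g\<bar> \<le> B * (d - c)"
proof -
  have "0 \<le> B" using assms(2) assms(3)[of c] by auto
  then show ?thesis
    using has_integral_bound_real[OF _ finite.emptyI integrable_integral[OF assms(1)]] assms by auto
qed

lemma borel_measurable_set_integral_parametric:
  fixes F :: "real \<Rightarrow> real \<Rightarrow> real"
  assumes [measurable]: "case_prod F \<in> borel_measurable (borel \<Otimes>\<^sub>M borel)" and [measurable]: "A \<in> sets borel"
  shows "(\<lambda>x. LINT t:A|lborel. F x t) \<in> borel_measurable borel"
  unfolding set_lebesgue_integral_def
  by (rule lborel.borel_measurable_lebesgue_integral) (simp add: lborel_prod)

lemma integral_Icc_iterated_eq_set_integral:
  fixes F :: "real \<Rightarrow> real \<Rightarrow> real"
  assumes [measurable]: "case_prod F \<in> borel_measurable (borel \<Otimes>\<^sub>M borel)"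
    and "c \<le> d" and bound: "\<And>x t. x \<in> {a..b} \<Longrightarrow> t \<in> {c..d} \<Longrightarrow> \<bar>F x t\<bar> \<le> B"
  shows "integral {a..b} (\<lambda>x. integral {c..d} (F x))
    = (LINT x:{a..b}|lborel. LINT t:{c..d}|lborel. F x t)"
proof -
  have Fx: "F x \<in> borel_measurable borel" for x
    by measurable
  have inner: "integral {c..d} (F x) = (LINT t:{c..d}|lborel. F x t)" if "x \<in> {a..b}" for x
    using integral_Icc_eq_set_integral_bounded[OF Fx] bound that by blast
  have "\<bar>LINT t:{c..d}|lborel. F x t\<bar> \<le> B * (d - c)" if "x \<in> {a..b}" for x
    using abs_integral_Icc_le integrable_on_Icc_bounded[OF Fx] bound that \<open>c \<le> d\<close> inner by metis
  then have "set_integrable lborel {a..b} (\<lambda>x. LINT t:{c..d}|lborel. F x t)"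
    by (intro set_integrable_Icc_bounded borel_measurable_set_integral_parametric) auto
  then have "(LINT x:{a..b}|lborel. LINT t:{c..d}|lborel. F x t) = integral {a..b} (\<lambda>x. LINT t:{c..d}|lborel. F x t)"
    by (rule set_borel_integral_eq_integral)
  also have "\<dots> = integral {a..b} (\<lambda>x. integral {c..d} (F x))"
    by (rule integral_cong) (simp add: inner)
  finally show ?thesis ..
qed

lemma integral_Icc_swap:
  fixes F :: "real \<Rightarrow> real \<Rightarrow> real"
  assumes F [measurable]: "case_prod F \<in> borel_measurable (borel \<Otimes>\<^sub>M borel)"
    and "a \<le> b" and "c \<le> d" and bound: "\<And>x t. x \<in> {a..b} \<Longrightarrow> t \<in> {c..d} \<Longrightarrow> \<bar>F x t\<bar> \<le> B"
  shows "integral {a..b} (\<lambda>x. integral {c..d} (F x)) = integral {c..d} (\<lambda>t. integral {a..b} (\<lambda>x. F x t))"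
proof -
  let ?G = "\<lambda>(x, t). indicator {a..b} x * indicator {c..d} t * F x t"
  have "integrable (lborel \<Otimes>\<^sub>M lborel) ?G"
  proof (rule integrableI_bounded_set[where A="{a..b} \<times> {c..d}" and B=B])
    show "?G \<in> borel_measurable (lborel \<Otimes>\<^sub>M lborel)"
      by measurable
    show "emeasure (lborel \<Otimes>\<^sub>M lborel) ({a..b} \<times> {c..d}) < \<infinity>"
      by (simp add: lborel.emeasure_pair_measure_Times emeasure_lborel_Icc_eq ennreal_mult_less_top)
  qed (use bound in \<open>auto simp: indicator_def\<close>)
  then have "(\<integral>x. \<integral>t. indicator {a..b} x * (indicator {c..d} t * F x t) \<partial>lborel \<partial>lborel)
      = (\<integral>t. \<integral>x. indicator {c..d} t * (indicator {a..b} x * F x t) \<partial>lborel \<partial>lborel)"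
    using lborel_pair.Fubini_integral[of "\<lambda>x t. indicator {a..b} x * indicator {c..d} t * F x t"]
    by (simp add: ac_simps)
  then have "(LINT x:{a..b}|lborel. LINT t:{c..d}|lborel. F x t) = (LINT t:{c..d}|lborel. LINT x:{a..b}|lborel. F x t)"
    by (simp only: set_lebesgue_integral_def real_scaleR_def integral_mult_right_zero)
  moreover have "case_prod (\<lambda>t x. F x t) \<in> borel_measurable (borel \<Otimes>\<^sub>M borel)"
    by measurable
  then have "integral {c..d} (\<lambda>t. integral {a..b} (\<lambda>x. F x t))
      = (LINT t:{c..d}|lborel. LINT x:{a..b}|lborel. F x t)"
    by (rule integral_Icc_iterated_eq_set_integral) (use \<open>a \<le> b\<close> bound in auto)
  ultimately show ?thesis
    using integral_Icc_iterated_eq_set_integral[OF F \<open>c \<le> d\<close> bound] by simp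
qed

lemma integral_power_diff:
  fixes t y :: real
  assumes "t \<le> y"
  shows "integral {t..y} (\<lambda>s. (s - t) ^ m) = (y - t) ^ Suc m / Suc m"
proof -
  have "((\<lambda>s. (s - t) ^ m) has_integral (y - t) ^ Suc m / Suc m - (t - t) ^ Suc m / Suc m) {t..y}"
  proof (rule fundamental_theorem_of_calculus[OF assms])
    show "((\<lambda>s. (s - t) ^ Suc m / Suc m) has_vector_derivative (x - t) ^ m) (at x within {t..y})" for x
      unfolding has_real_derivative_iff_has_vector_derivative[symmetric]
      by (rule derivative_eq_intros refl | simp)+
  qed
  then show ?thesis
    by (simp add: integral_unique)
qed

lemma integral_Icc_truncate_upper:
  fixes h :: "real \<Rightarrow> real"
  assumes "s \<in> {a..y}"
  shows "integral {a..y} (\<lambda>t. if t \<le> s then h t else 0) = integral {a..s} h"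
  using assms integral_restrict_Int[of "{a..y}" "{..s}" h] by (simp add: min_absorb1)

lemma integral_Icc_truncate_lower:
  fixes h :: "real \<Rightarrow> real"
  assumes "t \<in> {a..y}"
  shows "integral {a..y} (\<lambda>s. if t \<le> s then h s else 0) = integral {t..y} h"
  using assms integral_restrict_Int[of "{a..y}" "{t..}" h] by (simp add: max_absorb1)

lemma iter_int_Suc_eq_integral:
  fixes g :: "real \<Rightarrow> real"
  assumes g [measurable]: "g \<in> borel_measurable borel"
    and bound: "\<And>x. x \<in> {a..b} \<Longrightarrow> \<bar>g x\<bar> \<le> B" and "y \<in> {a..b}"
  shows "iter_int a (Suc m) g y = integral {a..y} (\<lambda>t. (y - t) ^ m / fact m * g t)"
  using \<open>y \<in> {a..b}\<close>
proof (induction m arbitrary: y)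
  case 0
  then show ?case
    by (simp add: iter_int.simps(1)[abs_def])
next
  case (Suc m)
  then have y: "a \<le> y" "y \<le> b" by auto
  define F where "F s t = (if t \<le> s then (s - t) ^ m / fact m * g t else 0)" for s t
  have "iter_int a (Suc (Suc m)) g y = integral {a..y} (\<lambda>s. integral {a..s} (\<lambda>t. (s - t) ^ m / fact m * g t))"
    unfolding iter_int.simps(2)[of a "Suc m"] by (rule integral_cong) (use Suc.IH y in auto)
  also have "\<dots> = integral {a..y} (\<lambda>s. integral {a..y} (F s))"
    unfolding F_def by (rule integral_cong) (simp add: integral_Icc_truncate_upper)
  also have "\<dots> = integral {a..y} (\<lambda>t. integral {a..y} (\<lambda>s. F s t))"
  proof (rule integral_Icc_swap[where B="(y - a) ^ m / fact m * \<bar>B\<bar>"])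
    show "case_prod F \<in> borel_measurable (borel \<Otimes>\<^sub>M borel)"
      unfolding F_def by measurable
    fix s t assume st: "s \<in> {a..y}" "t \<in> {a..y}"
    have "\<bar>(s - t) ^ m\<bar> * \<bar>g t\<bar> \<le> (y - a) ^ m * \<bar>B\<bar>" if "t \<le> s"
      using st that bound[of t] y by (intro mult_mono) (auto simp: power_abs intro!: power_mono)
    then show "\<bar>F s t\<bar> \<le> (y - a) ^ m / fact m * \<bar>B\<bar>"
      using y by (auto simp: F_def abs_mult divide_right_mono)
  qed (use y in auto)
  also have "\<dots> = integral {a..y} (\<lambda>t. integral {t..y} (\<lambda>s. (s - t) ^ m) * (g t / fact m))"
    unfolding F_def by (rule integral_cong) (simp add: integral_Icc_truncate_lower integral_mult_left ac_simps)
  also have "\<dots> = integral {a..y} (\<lambda>t. (y - t) ^ Suc m / fact (Suc m) * g t)"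
    by (rule integral_cong) (simp add: integral_power_diff)
  finally show ?case .
qed

lemma integrable_on_Icc_continuous_mult:
  fixes P f :: "real \<Rightarrow> real"
  assumes "continuous_on UNIV P" and "f \<in> borel_measurable borel"
    and bound: "\<And>x. x \<in> {c..d} \<Longrightarrow> \<bar>f x\<bar> \<le> B"
  shows "(\<lambda>x. P x * f x) integrable_on {c..d}"
proof -
  obtain M where M: "\<And>x. x \<in> {c..d} \<Longrightarrow> \<bar>P x\<bar> \<le> M"
    using compact_continuous_image[OF continuous_on_subset[OF assms(1)] compact_Icc]
    by (metis compact_imp_bounded bounded_iff image_eqI real_norm_def subset_UNIV)
  show ?thesis
  proof (rule integrable_on_Icc_bounded[where B="M * B"])
    show "(\<lambda>x. P x * f x) \<in> borel_measurable borel"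
      using borel_measurable_continuous_onI[OF assms(1)] assms(2) by measurable
    show "\<bar>P x * f x\<bar> \<le> M * B" if "x \<in> {c..d}" for x
      unfolding abs_mult using M[OF that] bound[OF that] by (intro mult_mono) auto
  qed
qed

lemma iter_int_Suc_linear_combination:
  fixes f :: "'i \<Rightarrow> real \<Rightarrow> real"
  assumes "finite S" and "a \<le> b" and [measurable]: "\<And>i. i \<in> S \<Longrightarrow> f i \<in> borel_measurable borel"
    and bound: "\<And>i x. i \<in> S \<Longrightarrow> x \<in> {a..b} \<Longrightarrow> \<bar>f i x\<bar> \<le> B"
  shows "iter_int a (Suc m) (\<lambda>y. \<Sum>i\<in>S. lam i * f i y) b
    = (\<Sum>i\<in>S. lam i * integral {a..b} (\<lambda>t. (b - t) ^ m / fact m * f i t))"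
proof -
  have "\<bar>\<Sum>i\<in>S. lam i * f i x\<bar> \<le> (\<Sum>i\<in>S. \<bar>lam i\<bar> * B)" if "x \<in> {a..b}" for x
    using bound that
    by (auto simp: abs_mult intro!: order_trans[OF sum_abs] sum_mono mult_left_mono)
  then have "iter_int a (Suc m) (\<lambda>y. \<Sum>i\<in>S. lam i * f i y) b
      = integral {a..b} (\<lambda>t. \<Sum>i\<in>S. lam i * ((b - t) ^ m / fact m * f i t))"
    using \<open>a \<le> b\<close> by (subst iter_int_Suc_eq_integral) (auto simp: sum_distrib_left ac_simps)
  also have "\<dots> = (\<Sum>i\<in>S. lam i * integral {a..b} (\<lambda>t. (b - t) ^ m / fact m * f i t))"
  proof (subst integral_sum)
    show "(\<lambda>t. lam i * ((b - t) ^ m / fact m * f i t)) integrable_on {a..b}" if "i \<in> S" for i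
      using integrable_on_Icc_continuous_mult[of "\<lambda>t. lam i * ((b - t) ^ m / fact m)" "f i" a b B] bound that
      by (simp add: continuous_intros mult.assoc)
  qed (simp_all add: \<open>finite S\<close>)
  finally show ?thesis .
qed

lemma continuous_on_chebU: "continuous_on UNIV (chebU n)"
  by (induction n rule: chebU.induct[where P="\<lambda>n _. continuous_on UNIV (chebU n)"])
    (auto simp: chebU.simps[abs_def] intro!: continuous_intros)

lemma borel_measurable_chebU [measurable]: "chebU n \<in> borel_measurable borel"
  using continuous_on_chebU by (rule borel_measurable_continuous_onI)

lemma psi_eq_integral:
  assumes "x \<in> {-1..1}"
  shows "psi r x = integral {-1..x} (\<lambda>t. (x - t) ^ r / fact r * sgn (chebU (r + 1) t))"
proof -
  have truncated: "(\<lambda>t. trunc_pow r x t * sgn (chebU (r + 1) t))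
      = (\<lambda>t. if t \<le> x then (x - t) ^ r * sgn (chebU (r + 1) t) else 0)"
    by (simp add: trunc_pow_def fun_eq_iff)
  show ?thesis
    unfolding psi_def truncated integral_Icc_truncate_upper[OF assms] by (simp add: integral_divide)
qed

lemma psi_eq_iter_int:
  assumes "x \<in> {-1..1}"
  shows "psi r x = iter_int (-1) (Suc r) (\<lambda>t. sgn (chebU (r + 1) t)) x"
  unfolding psi_eq_integral[OF assms]
  by (rule iter_int_Suc_eq_integral[symmetric, where B=1]) (use assms in \<open>auto simp: abs_sgn_eq\<close>)

lemma borel_measurable_psi [measurable]: "psi r \<in> borel_measurable borel"
proof -
  have "psi r = (\<lambda>x. (LINT t:{-1..1}|lborel. trunc_pow r x t * sgn (chebU (r + 1) t)) / fact r)"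
  proof
    fix x
    have "\<bar>trunc_pow r x t * sgn (chebU (r + 1) t)\<bar> \<le> (\<bar>x\<bar> + 1) ^ r" if "t \<in> {-1..1}" for t
      using that by (auto simp: trunc_pow_def abs_mult abs_sgn_eq power_abs intro!: power_mono)
    then show "psi r x = (LINT t:{-1..1}|lborel. trunc_pow r x t * sgn (chebU (r + 1) t)) / fact r"
      unfolding psi_def
      by (subst integral_Icc_eq_set_integral_bounded[where B="(\<bar>x\<bar> + 1) ^ r"]) (auto simp: trunc_pow_def)
  qed
  moreover have "(\<lambda>x. LINT t:{-1..1}|lborel. trunc_pow r x t * sgn (chebU (r + 1) t)) \<in> borel_measurable borel"
    by (rule borel_measurable_set_integral_parametric) (auto simp: trunc_pow_def)
  ultimately show ?thesis
    by simp
qed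

lemma abs_psi_le:
  assumes "x \<in> {-1..1}"
  shows "\<bar>psi r x\<bar> \<le> 2 ^ Suc r / fact r"
proof -
  have bound: "\<bar>(x - t) ^ r / fact r * sgn (chebU (r + 1) t)\<bar> \<le> 2 ^ r / fact r" if "t \<in> {-1..x}" for t
    using assms that
    by (auto simp: abs_mult abs_sgn_eq power_abs intro!: mult_le_one power_mono divide_right_mono)
  have "(\<lambda>t. (x - t) ^ r / fact r * sgn (chebU (r + 1) t)) integrable_on {-1..x}"
    by (rule integrable_on_Icc_continuous_mult[where B=1]) (auto intro!: continuous_intros simp: abs_sgn_eq)
  then have "\<bar>psi r x\<bar> \<le> 2 ^ r / fact r * (x - -1)"
    unfolding psi_eq_integral[OF assms] by (rule abs_integral_Icc_le[OF _ _ bound]) (use assms in auto)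
  also have "\<dots> \<le> 2 ^ Suc r / fact r"
    using assms by (auto simp: field_simps)
  finally show ?thesis .
qed

lemma phi1_eq_integral_psi: "phi1 \<alpha> r = \<alpha> * (1 / 2) ^ Suc r * integral {-1..1} (psi r)"
proof -
  have "integral {-1..1} (psi r) = integral {-1..1} (iter_int (-1) (Suc r) (\<lambda>t. sgn (chebU (r + 1) t)))"
    by (rule integral_cong) (simp add: psi_eq_iter_int)
  also have "\<dots> = iter_int (-1) (Suc (Suc r)) (\<lambda>t. sgn (chebU (r + 1) t)) 1"
    by (simp only: iter_int.simps(2))
  also have "\<dots> = integral {-1..1} (\<lambda>t. (1 - t) ^ (r + 1) * sgn (chebU (r + 1) t)) / fact (r + 1)"
    by (subst iter_int_Suc_eq_integral[where B=1 and b=1]) (auto simp: abs_sgn_eq integral_divide)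
  finally show ?thesis
    by (simp add: phi1_def)
qed

lemma integral_Icc_affine:
  fixes f :: "real \<Rightarrow> real"
  assumes f: "f integrable_on {c..d}" and "c < d"
  shows "integral {c..d} f = (d - c) / 2 * integral {-1..1} (\<lambda>x. f ((d - c) / 2 * x + (c + d) / 2))"
proof -
  have pos: "(d - c) / 2 > 0"
    using \<open>c < d\<close> by simp
  have ends: "(c - (c + d) / 2) /\<^sub>R ((d - c) / 2) = -1" "(d - (c + d) / 2) /\<^sub>R ((d - c) / 2) = 1"
    using pos by (simp_all add: field_simps)
  have "((\<lambda>x. f (((d - c) / 2) *\<^sub>R x + (c + d) / 2)) has_integral integral {c..d} f /\<^sub>R ((d - c) / 2) ^ DIM(real))
      (cbox (-1) 1)"
    using has_integral_affinity'[OF integrable_integral[OF f[folded cbox_interval]] pos, of "(c + d) / 2"]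
    unfolding ends cbox_interval .
  then have "integral (cbox (-1) 1) (\<lambda>x. f (((d - c) / 2) *\<^sub>R x + (c + d) / 2))
      = integral {c..d} f /\<^sub>R ((d - c) / 2) ^ DIM(real)"
    by (rule integral_unique)
  then show ?thesis
    using pos by (simp add: field_simps)
qed

lemma borel_measurable_phi [measurable]: "phi \<alpha> r c d \<in> borel_measurable borel"
  unfolding phi_def by measurable

lemma phi_affine:
  assumes "c < d"
  shows "phi \<alpha> r c d ((d - c) / 2 * x + (c + d) / 2) = \<alpha> * ((d - c) / 2) ^ r * psi r x"
proof -
  have "(2 * ((d - c) / 2 * x + (c + d) / 2) - d - c) / (d - c) = x"
    using assms by (simp add: field_simps)
  then show ?thesis
    by (simp add: phi_def)
qed

lemma abs_phi_le:
  assumes "c < d" and "x \<in> {c..d}"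
  shows "\<bar>phi \<alpha> r c d x\<bar> \<le> \<bar>\<alpha>\<bar> * ((d - c) / 2) ^ r * (2 ^ Suc r / fact r)"
proof -
  have arg: "(2 * x - d - c) / (d - c) \<in> {-1..1}"
    using assms by (auto simp: divide_le_eq le_divide_eq)
  have "\<bar>phi \<alpha> r c d x\<bar> = \<bar>\<alpha>\<bar> * ((d - c) / 2) ^ r * \<bar>psi r ((2 * x - d - c) / (d - c))\<bar>"
    using assms(1) by (simp add: phi_def abs_mult)
  also have "\<dots> \<le> \<bar>\<alpha>\<bar> * ((d - c) / 2) ^ r * (2 ^ Suc r / fact r)"
    using assms(1) abs_psi_le[OF arg] by (intro mult_left_mono) auto
  finally show ?thesis .
qed

lemma integral_mult_phi:
  assumes "c < d" and "continuous_on UNIV w"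
  shows "integral {c..d} (\<lambda>t. w t * phi \<alpha> r c d t)
    = \<alpha> * ((d - c) / 2) ^ Suc r * integral {-1..1} (\<lambda>x. w ((d - c) / 2 * x + (c + d) / 2) * psi r x)"
proof -
  let ?u = "\<lambda>x. (d - c) / 2 * x + (c + d) / 2"
  have "(\<lambda>t. w t * phi \<alpha> r c d t) integrable_on {c..d}"
    using integrable_on_Icc_continuous_mult[OF assms(2) borel_measurable_phi abs_phi_le[OF assms(1)]] .
  then have "integral {c..d} (\<lambda>t. w t * phi \<alpha> r c d t)
      = (d - c) / 2 * integral {-1..1} (\<lambda>x. w (?u x) * phi \<alpha> r c d (?u x))"
    using assms(1) by (rule integral_Icc_affine)
  also have "integral {-1..1} (\<lambda>x. w (?u x) * phi \<alpha> r c d (?u x))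
      = \<alpha> * ((d - c) / 2) ^ r * integral {-1..1} (\<lambda>x. w (?u x) * psi r x)"
    unfolding phi_affine[OF assms(1)] by (subst integral_mult_right[symmetric]) (simp add: ac_simps)
  finally show ?thesis
    by (simp add: ac_simps)
qed

lemma grid_Suc: "0 < N \<Longrightarrow> grid a b N (Suc m) = grid a b N m + (b - a) / N"
  by (simp add: grid_def field_simps)

lemma borel_measurable_fpiece [measurable]: "fpiece \<alpha> r a b N m \<in> borel_measurable borel"
  unfolding fpiece_def by measurable

lemma abs_fpiece_le:
  assumes "a < b" and "0 < N"
  shows "\<bar>fpiece \<alpha> r a b N m x\<bar> \<le> \<bar>\<alpha>\<bar> * ((b - a) / N / 2) ^ r * (2 ^ Suc r / fact r)"
proof (cases "x \<in> {grid a b N m..grid a b N (Suc m)}")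
  case True
  then show ?thesis
    using abs_phi_le[OF _ True, of \<alpha> r] assms by (simp add: fpiece_def grid_Suc)
next
  case False
  then have "fpiece \<alpha> r a b N m x = 0"
    by (auto simp: fpiece_def)
  then show ?thesis
    using assms by simp
qed

lemma integral_mult_fpiece:
  assumes "a < b" and "m < N" and "continuous_on UNIV w"
  shows "integral {a..b} (\<lambda>t. w t * fpiece \<alpha> r a b N m t)
    = \<alpha> * ((b - a) / N / 2) ^ Suc r * integral {-1..1} (\<lambda>x. w (a + (m + (x + 1) / 2) * ((b - a) / N)) * psi r x)"
proof -
  define c d where "c = grid a b N m" and "d = grid a b N (Suc m)"
  have d_eq: "d = c + (b - a) / N"
    using assms(2) by (simp add: c_def d_def grid_Suc)
  moreover have "a \<le> c"
    using assms by (simp add: c_def grid_def)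
  moreover have "real (Suc m) * (b - a) \<le> real N * (b - a)"
    using assms by (intro mult_right_mono) auto
  then have "d \<le> b"
    using assms by (simp add: d_def grid_def field_simps)
  moreover have "c < d"
    using assms by (simp add: d_eq)
  ultimately have "{c..d} \<inter> {a..b} = {c..d}"
    by auto
  moreover have "(\<lambda>t. w t * fpiece \<alpha> r a b N m t) = (\<lambda>t. if t \<in> {c..d} then w t * phi \<alpha> r c d t else 0)"
    by (auto simp: fpiece_def c_def d_def fun_eq_iff)
  ultimately have "integral {a..b} (\<lambda>t. w t * fpiece \<alpha> r a b N m t) = integral {c..d} (\<lambda>t. w t * phi \<alpha> r c d t)"
    by (simp only: integral_restrict_Int)
  also have "\<dots> = \<alpha> * ((b - a) / N / 2) ^ Suc r * integral {-1..1} (\<lambda>x. w (a + (m + (x + 1) / 2) * ((b - a) / N)) * psi r x)"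
  proof -
    have "(d - c) / 2 * x + (c + d) / 2 = a + (m + (x + 1) / 2) * ((b - a) / N)" for x
      using assms(2) by (simp add: d_eq c_def grid_def field_simps)
    moreover have "d - c = (b - a) / N"
      by (simp add: d_eq)
    ultimately show ?thesis
      using integral_mult_phi[OF \<open>c < d\<close> assms(3)] by (simp only:)
  qed
  finally show ?thesis .
qed

lemma shifted_cell_point:
  assumes "j < k" and "1 \<le> n"
  shows "b - (a + (real (n * (k - j) + i - 1) + y) * ((b - a) / real (2 * k * n)))
    = (b - a) * (1 / 2 + real j / (2 * real k) - (real i - 1 + y) / (2 * real k * real n))"
proof -
  have "1 \<le> n * (k - j)"
    using assms by simp
  then have "1 \<le> n * (k - j) + i"
    by linarith
  then have "real (n * (k - j) + i - 1) = real n * (real k - real j) + real i - 1"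
    using assms(1) by (subst of_nat_diff) (auto simp: of_nat_diff)
  then show ?thesis
    using assms by (simp only:) (simp add: field_simps)
qed

lemma shifted_index_less:
  fixes i j k n :: nat
  assumes "j < k" and "i < k * n"
  shows "n * (k - j) + i - 1 < 2 * k * n"
proof -
  have "n * (k - j) \<le> k * n"
    using mult_le_mono2[OF diff_le_self, of n k j] by (simp add: mult.commute)
  then show ?thesis
    using assms(2) by linarith
qed

lemma sum_power_at_shifted_cells:
  assumes c: "\<forall>x::real. (\<Sum>j<k. c j * (1/2 + real j / (2 * real k) - x) ^ (k - 1)) = 1" and "1 \<le> n"
  shows "(\<Sum>j<k. c j * (b - (a + (real (n * (k - j) + i - 1) + y) * ((b - a) / real (2 * k * n)))) ^ (k - 1))
    = (b - a) ^ (k - 1)"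
proof -
  let ?s = "(real i - 1 + y) / (2 * real k * real n)"
  have "(\<Sum>j<k. c j * (b - (a + (real (n * (k - j) + i - 1) + y) * ((b - a) / real (2 * k * n)))) ^ (k - 1))
      = (\<Sum>j<k. (b - a) ^ (k - 1) * (c j * (1 / 2 + real j / (2 * real k) - ?s) ^ (k - 1)))"
    by (intro sum.cong refl)
      (simp only: lessThan_iff shifted_cell_point[OF _ \<open>1 \<le> n\<close>], simp only: power_mult_distrib mult_ac)
  also have "\<dots> = (b - a) ^ (k - 1)"
    using c by (simp add: sum_distrib_left[symmetric])
  finally show ?thesis .
qed

lemma sum_integral_fpiece_shifted:
  assumes c: "\<forall>x::real. (\<Sum>j<k. c j * (1/2 + real j / (2 * real k) - x) ^ (k - 1)) = 1"
    and "1 \<le> n" and "a < b" and "i < k * n"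
  shows "(\<Sum>j<k. c j * integral {a..b}
      (\<lambda>t. (b - t) ^ (k - 1) / fact (k - 1) * fpiece \<alpha> r a b (2 * k * n) (n * (k - j) + i - 1) t))
    = \<alpha> * ((b - a) / real (2 * k * n) / 2) ^ Suc r * ((b - a) ^ (k - 1) / fact (k - 1)) * integral {-1..1} (psi r)"
proof -
  let ?w = "\<lambda>t. (b - t) ^ (k - 1) / fact (k - 1)"
  let ?p = "\<lambda>j x. a + (real (n * (k - j) + i - 1) + (x + 1) / 2) * ((b - a) / real (2 * k * n))"
  let ?C = "\<alpha> * ((b - a) / real (2 * k * n) / 2) ^ Suc r"
  have w: "continuous_on UNIV ?w"
    by (intro continuous_intros) simp
  have "(\<Sum>j<k. c j * integral {a..b} (\<lambda>t. ?w t * fpiece \<alpha> r a b (2 * k * n) (n * (k - j) + i - 1) t))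
      = (\<Sum>j<k. ?C * integral {-1..1} (\<lambda>x. c j * (?w (?p j x) * psi r x)))"
  proof (rule sum.cong[OF refl])
    fix j assume "j \<in> {..<k}"
    then have "integral {a..b} (\<lambda>t. ?w t * fpiece \<alpha> r a b (2 * k * n) (n * (k - j) + i - 1) t)
        = ?C * integral {-1..1} (\<lambda>x. ?w (?p j x) * psi r x)"
      using shifted_index_less[of j k i n] \<open>i < k * n\<close> by (intro integral_mult_fpiece[OF \<open>a < b\<close> _ w]) simp
    then show "c j * integral {a..b} (\<lambda>t. ?w t * fpiece \<alpha> r a b (2 * k * n) (n * (k - j) + i - 1) t)
        = ?C * integral {-1..1} (\<lambda>x. c j * (?w (?p j x) * psi r x))"
      by (simp only: integral_mult_right mult_ac)
  qed
  also have "\<dots> = ?C * integral {-1..1} (\<lambda>x. \<Sum>j<k. c j * (?w (?p j x) * psi r x))"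
  proof (subst integral_sum)
    fix j
    have "(\<lambda>x. c j * ?w (?p j x) * psi r x) integrable_on {-1..1}"
      by (rule integrable_on_Icc_continuous_mult[OF _ borel_measurable_psi abs_psi_le])
        (use \<open>i < k * n\<close> in \<open>auto intro!: continuous_intros\<close>)
    then show "(\<lambda>x. c j * (?w (?p j x) * psi r x)) integrable_on {-1..1}"
      by (simp add: mult.assoc)
  qed (simp_all add: sum_distrib_left)
  also have "(\<lambda>x. \<Sum>j<k. c j * (?w (?p j x) * psi r x)) = (\<lambda>x. (b - a) ^ (k - 1) / fact (k - 1) * psi r x)"
    using sum_power_at_shifted_cells[OF c \<open>1 \<le> n\<close>]
    by (simp add: sum_distrib_right[symmetric] sum_divide_distrib[symmetric] mult.assoc[symmetric])
  finally show ?thesis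
    by (simp add: integral_mult_right)
qed

lemma sum_iter_int_shifted_fpieces:
  assumes c: "\<forall>x::real. (\<Sum>j<k. c j * (1/2 + real j / (2 * real k) - x) ^ (k - 1)) = 1"
    and "1 \<le> k" and "1 \<le> n" and "a < b"
  shows "(\<Sum>j<k. c j * iter_int a k (\<lambda>y. \<Sum>i<k*n. lam i * fpiece \<alpha> r a b (2 * k * n) (n * (k - j) + i - 1) y) b)
    = ((b - a) / real (2 * k * n)) ^ (r + 1) * (b - a) ^ (k - 1) * (1 / fact (k - 1)) * phi1 \<alpha> r * (\<Sum>i<k*n. lam i)"
proof -
  let ?f = "\<lambda>j i. fpiece \<alpha> r a b (2 * k * n) (n * (k - j) + i - 1)"
  let ?J = "\<lambda>j i. integral {a..b} (\<lambda>t. (b - t) ^ (k - 1) / fact (k - 1) * ?f j i t)"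
  let ?C = "\<alpha> * ((b - a) / real (2 * k * n) / 2) ^ Suc r * ((b - a) ^ (k - 1) / fact (k - 1)) * integral {-1..1} (psi r)"
  have "iter_int a (Suc (k - 1)) (\<lambda>y. \<Sum>i<k*n. lam i * ?f j i y) b = (\<Sum>i<k*n. lam i * ?J j i)" for j
    by (rule iter_int_Suc_linear_combination[OF _ _ _ abs_fpiece_le]) (use assms in auto)
  then have "(\<Sum>j<k. c j * iter_int a k (\<lambda>y. \<Sum>i<k*n. lam i * ?f j i y) b)
      = (\<Sum>i<k*n. lam i * (\<Sum>j<k. c j * ?J j i))"
    using \<open>1 \<le> k\<close> by (simp add: sum_distrib_left sum.swap[of _ "{..<k}"] ac_simps)
  also have "\<dots> = (\<Sum>i<k*n. lam i * ?C)"
  proof (rule sum.cong[OF refl])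
    fix i assume "i \<in> {..<k*n}"
    then have "(\<Sum>j<k. c j * ?J j i) = ?C"
      using assms by (intro sum_integral_fpiece_shifted) auto
    then show "lam i * (\<Sum>j<k. c j * ?J j i) = lam i * ?C"
      by (rule arg_cong)
  qed
  also have "\<dots> = (\<Sum>i<k*n. lam i) * ?C"
    by (simp only: sum_distrib_right)
  finally show ?thesis
    unfolding phi1_eq_integral_psi power_divide by (simp add: field_simps)
qed

lemma step_size_power_eq:
  assumes "1 \<le> k"
  shows "((b - a) / real (2 * k * n)) ^ (r + 1) * (b - a) ^ (k - 1) * (1 / fact (k - 1)) * p * S
    = 1 / real (k * n) ^ r * (b - a) ^ (k + r) * (1 / 2 ^ (r + 1)) * (p / fact (k - 1)) * (1 / real (k * n) * S)"
proof -
  have "k + r = (r + 1) + (k - 1)"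
    using assms by simp
  then have split: "(b - a) ^ (k + r) = (b - a) ^ (r + 1) * (b - a) ^ (k - 1)"
    by (simp only: power_add)
  show ?thesis
    unfolding split by (simp add: power_divide power_mult_distrib field_simps)
qed

theorem mainTheorem5:
  fixes r k n :: nat and a b \<alpha> :: real and c lam :: "nat \<Rightarrow> real"
  assumes "r \<ge> 1" and "k \<ge> 1" and "n \<ge> 1" and "a < b"
    and "\<forall>x::real. (\<Sum>j<k. c j * (1/2 + real j / (2 * real k) - x) ^ (k - 1)) = 1"
  shows "(let N = 2 * k * n; h = (b - a) / real N;
              I = (\<lambda>j. iter_int a k
                     (\<lambda>y. \<Sum>i<k*n. lam i * fpiece \<alpha> r a b N (n * (k - j) + i - 1) y) b)
          in (\<Sum>j<k. c j * I j)
               = h ^ (r + 1) * (b - a) ^ (k - 1) * (1 / fact (k - 1)) * phi1 \<alpha> r * (\<Sum>i<k*n. lam i)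
           \<and> h ^ (r + 1) * (b - a) ^ (k - 1) * (1 / fact (k - 1)) * phi1 \<alpha> r * (\<Sum>i<k*n. lam i)
               = (1 / real (k * n) ^ r) * (b - a) ^ (k + r) * (1 / 2 ^ (r + 1))
                 * (phi1 \<alpha> r / fact (k - 1)) * ((1 / real (k * n)) * (\<Sum>i<k*n. lam i)))"
  unfolding Let_def
  using sum_iter_int_shifted_fpieces[OF assms(5,2,3,4)] step_size_power_eq[OF assms(2)] by (rule conjI)

end
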